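(* Let $X$ be a compact subanalytic subset of $\mathbb{R}^n$. Let $p\mapsto q_X(p)$ be any function $\mathbb{N}\to\mathbb{N}$ with $q_X(p)\ge p$ such that, for every $p$, every $f:X\to\mathbb{R}$ and every $q\ge q_X(p)$: if $\nabla^qf:\tau^q(X)\to\mathbb{R}$ then $f$ is the restriction of a $\mathcal{C}^p$ function on $\mathbb{R}^n$, and if moreover $a\in X$ and $\nabla^q_af=0$ then $f$ is the restriction of a $\mathcal{C}^p$ function on $\mathbb{R}^n$ that is $p$-flat at $a$. If $s\ge p$ and $q\ge q_X(s)$, then $$\mathcal{T}^s(X)_p\subset\tau^q(X)_p.$$
   Context: Notation. $\mathcal{P}_k$: real polynomials on $\mathbb{R}^n$ of degree $\le k$; $\mathcal{P}_k^*$ dual; $r_k=\dim\mathcal{P}_k$. For $\xi\in\mathcal{P}_k^*$, $b\in\mathbb{R}^n$, $|\alpha|\le k$: $\xi_\alpha(b):=\xi(\tfrac1{\alpha!}(x-b)^\alpha)$; $\delta_a(P)=P(a)$. A bundle over $X$ with fibres in $W$ is a subset of $X\times W$ with linear-subspace fibres. $p$-flat at $a$: all partial derivatives of order $\le p$ vanish at $a$. $T^p_aF$ is the Taylor polynomial of order $p$ of $F$ at $a$. Paratangent bundle of order $k$: for a bundle $E\subset X\times\mathcal{P}_k^*$, $\Delta E=\{(a,b,\xi+\eta):a,b\in X,\xi\in E_a,\eta\in E_b,|a-b|^{k-|\alpha|}|\eta_\alpha(b)|\le1\ \forall|\alpha|\le k\}$, $E'=\{(a,\xi):(a,a,\xi)\in\overline{\Delta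 E}\}$, $\rho(E)=\{(a,\xi):\xi\in\operatorname{Span}E'_a\}$; with $E_0=\{(a,\lambda\delta_a)\}$, $\tau^k(X):=\rho^{2r_k}(E_0)$ (the iterates are constant from $2r_k$ on). For $f:X\to\mathbb{R}$ and bundles $\Phi\subset X\times(\mathcal{P}_k^*\times\mathbb{R})$: $\Delta\Phi=\{(a,b,\xi+\eta,\lambda+\mu):(\xi,\lambda)\in\Phi_a,(\eta,\mu)\in\Phi_b,|a-b|^{k-|\alpha|}|\eta_\alpha(b)|\le1\ \forall|\alpha|\le k\}$, $\Phi'=\{(a,\xi,\lambda):(a,a,\xi,\lambda)\in\overline{\Delta\Phi}\}$, $\rho(\Phi)$ fibrewise span of $\Phi'$; $\nabla^kf:=\rho^{2(r_k+1)}(\Phi_0)$ with $\Phi_0=\{(a,\lambda\delta_a,\lambda f(a))\}$. "$\nabla^kf:\tau^k(X)\to\mathbb{R}$" means each $\xi\in\tau^k_a(X)$ has exactly one $\lambda$ with $(a,\xi,\lambda)\in\nabla^kf$, written $\nabla^k_af(\xi)$; "$\nabla^k_af=0$" means it is $0$ for all $\xi\in\tau^k_a(X)$. For $q\ge p$ and $a\in\mathbb{R}^n$, $\pi_a:\mathcal{P}_q\to\mathcal{P}_p$ truncates $\sum_{|\beta|\le q}c_\beta(x-a)^\beta$ to $\sum_{|\beta|\le p}c_\beta(x-a)^\beta$ and $\iota_a(\xi)=\xi\circ\pi_a$. $\tau^q(X)_p$ has fibres $\iota_a^{-1}(\tau^q_a(X))\subset\mathcal{P}_p^*$. $I^s(X)$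 is the ideal of $\mathcal{C}^s$ functions on $\mathbb{R}^n$ vanishing on $X$. For $s\ge p$, $\mathcal{T}^s(X)_p$ is the bundle over $X$ with fibre $\mathcal{T}^s_a(X)_p=\{\xi\in\mathcal{P}_p^*:\xi(T^p_ah)=0\text{ for all }h\in I^s(X)\}$. *)

theory Defs
  imports "HOL-Analysis.Analysis"
begin

type_synonym 'n rv = "real^'n"

definition mi :: "nat \<Rightarrow> ('n::finite \<Rightarrow> nat) set" where
  "mi k = {\<alpha>. sum \<alpha> UNIV \<le> k}"

definition mdeg :: "('n::finite \<Rightarrow> nat) \<Rightarrow> nat" where
  "mdeg \<alpha> = sum \<alpha> UNIV"

definition afact :: "('n::finite \<Rightarrow> nat) \<Rightarrow> real" where
  "afact \<alpha> = (\<Prod>i\<in>UNIV. fact (\<alpha> i))"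

definition mono_at :: "'n rv \<Rightarrow> ('n::finite \<Rightarrow> nat) \<Rightarrow> 'n rv \<Rightarrow> real" where
  "mono_at b \<alpha> x = (\<Prod>i\<in>UNIV. (x$i - b$i) ^ (\<alpha> i))"

definition Pk :: "nat \<Rightarrow> (('n::finite) rv \<Rightarrow> real) set" where
  "Pk k = {P. \<exists>c. P = (\<lambda>x. \<Sum>\<alpha>\<in>mi k. c \<alpha> * mono_at 0 \<alpha> x)}"

text \<open>P_k^*: linear functionals on P_k, normalised to be 0 off P_k\<close>
definition dualk :: "nat \<Rightarrow> ((('n::finite) rv \<Rightarrow> real) \<Rightarrow> real) set" where
  "dualk k = {\<xi>. (\<forall>P\<in>Pk k. \<forall>Q\<in>Pk k. \<xi> (\<lambda>x. P x + Q x) = \<xi> P + \<xi> Q)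
              \<and> (\<forall>P\<in>Pk k. \<forall>c. \<xi> (\<lambda>x. c * P x) = c * \<xi> P)
              \<and> (\<forall>P. P \<notin> Pk k \<longrightarrow> \<xi> P = 0)}"

text \<open>distance on P_k^* (a norm via the monomial basis; it induces the usual topology)\<close>
definition ddist :: "nat \<Rightarrow> ((('n::finite) rv \<Rightarrow> real) \<Rightarrow> real) \<Rightarrow> (('n rv \<Rightarrow> real) \<Rightarrow> real) \<Rightarrow> real" where
  "ddist k \<xi> \<eta> = (\<Sum>\<alpha>\<in>(mi k :: ('n \<Rightarrow> nat) set). \<bar>\<xi> (mono_at 0 \<alpha>) - \<eta> (mono_at 0 \<alpha>)\<bar>)"

definition deltaf :: "nat \<Rightarrow> ('n::finite) rv \<Rightarrow> ('n rv \<Rightarrow> real) \<Rightarrow> real" where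
  "deltaf k a = (\<lambda>P. if P \<in> Pk k then P a else 0)"

definition xi_alpha :: "((('n::finite) rv \<Rightarrow> real) \<Rightarrow> real) \<Rightarrow> ('n \<Rightarrow> nat) \<Rightarrow> 'n rv \<Rightarrow> real" where
  "xi_alpha \<xi> \<alpha> b = \<xi> (\<lambda>x. mono_at b \<alpha> x / afact \<alpha>)"

definition fspan :: "((('n::finite) rv \<Rightarrow> real) \<Rightarrow> real) set \<Rightarrow> (('n rv \<Rightarrow> real) \<Rightarrow> real) set" where
  "fspan S = {\<xi>. \<exists>F c. finite F \<and> F \<subseteq> S \<and> \<xi> = (\<lambda>P. \<Sum>\<eta>\<in>F. c \<eta> * \<eta> P)}"

definition DeltaE :: "('n::finite) rv set \<Rightarrow> nat \<Rightarrow> ('n rv \<times> (('n rv \<Rightarrow> real) \<Rightarrow> real)) set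
    \<Rightarrow> ('n rv \<times> 'n rv \<times> (('n rv \<Rightarrow> real) \<Rightarrow> real)) set" where
  "DeltaE X k E = {(a, b, \<zeta>). a \<in> X \<and> b \<in> X \<and> (\<exists>\<xi> \<eta>. (a, \<xi>) \<in> E \<and> (b, \<eta>) \<in> E
      \<and> \<zeta> = (\<lambda>P. \<xi> P + \<eta> P)
      \<and> (\<forall>\<alpha>\<in>mi k. dist a b ^ (k - mdeg \<alpha>) * \<bar>xi_alpha \<eta> \<alpha> b\<bar> \<le> 1))}"

definition Eprime :: "('n::finite) rv set \<Rightarrow> nat \<Rightarrow> ('n rv \<times> (('n rv \<Rightarrow> real) \<Rightarrow> real)) set
    \<Rightarrow> ('n rv \<times> (('n rv \<Rightarrow> real) \<Rightarrow> real)) set" where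
  "Eprime X k E = {(a, \<xi>). a \<in> X \<and> \<xi> \<in> dualk k \<and>
      (\<forall>\<epsilon>>0. \<exists>a1 b1 \<xi>1. (a1, b1, \<xi>1) \<in> DeltaE X k E \<and> dist a1 a < \<epsilon> \<and> dist b1 a < \<epsilon>
          \<and> ddist k \<xi>1 \<xi> < \<epsilon>)}"

definition rhoE :: "('n::finite) rv set \<Rightarrow> nat \<Rightarrow> ('n rv \<times> (('n rv \<Rightarrow> real) \<Rightarrow> real)) set
    \<Rightarrow> ('n rv \<times> (('n rv \<Rightarrow> real) \<Rightarrow> real)) set" where
  "rhoE X k E = {(a, \<xi>). a \<in> X \<and> \<xi> \<in> fspan {\<eta>. (a, \<eta>) \<in> Eprime X k E}}"

definition E0 :: "('n::finite) rv set \<Rightarrow> nat \<Rightarrow> ('n rv \<times> (('n rv \<Rightarrow> real) \<Rightarrow> real)) set" where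
  "E0 X k = {(a, \<lambda>P. c * deltaf k a P) | a c. a \<in> X}"

text \<open>r_k = dim P_k = card (mi k)\<close>
definition ptau :: "('n::finite) rv set \<Rightarrow> nat \<Rightarrow> ('n rv \<times> (('n rv \<Rightarrow> real) \<Rightarrow> real)) set" where
  "ptau X k = (rhoE X k ^^ (2 * card (mi k :: ('n \<Rightarrow> nat) set))) (E0 X k)"

type_synonym 'n phib = "('n rv \<times> (('n rv \<Rightarrow> real) \<Rightarrow> real) \<times> real) set"

definition DeltaPhi :: "('n::finite) rv set \<Rightarrow> nat \<Rightarrow> 'n phib
    \<Rightarrow> ('n rv \<times> 'n rv \<times> (('n rv \<Rightarrow> real) \<Rightarrow> real) \<times> real) set" where
  "DeltaPhi X k \<Phi> = {(a, b, \<zeta>, \<nu>). a \<in> X \<and> b \<in> X \<and> (\<exists>\<xi> l \<eta> m. (a, \<xi>, l) \<in> \<Phi> \<and> (b, \<eta>, m) \<in> \<Phi>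
      \<and> \<zeta> = (\<lambda>P. \<xi> P + \<eta> P) \<and> \<nu> = l + m
      \<and> (\<forall>\<alpha>\<in>mi k. dist a b ^ (k - mdeg \<alpha>) * \<bar>xi_alpha \<eta> \<alpha> b\<bar> \<le> 1))}"

definition Phiprime :: "('n::finite) rv set \<Rightarrow> nat \<Rightarrow> 'n phib \<Rightarrow> 'n phib" where
  "Phiprime X k \<Phi> = {(a, \<xi>, l). a \<in> X \<and> \<xi> \<in> dualk k \<and>
      (\<forall>\<epsilon>>0. \<exists>a1 b1 \<xi>1 l1. (a1, b1, \<xi>1, l1) \<in> DeltaPhi X k \<Phi> \<and> dist a1 a < \<epsilon> \<and> dist b1 a < \<epsilon>
          \<and> ddist k \<xi>1 \<xi> < \<epsilon> \<and> \<bar>l1 - l\<bar> < \<epsilon>)}"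

definition rhoPhi :: "('n::finite) rv set \<Rightarrow> nat \<Rightarrow> 'n phib \<Rightarrow> 'n phib" where
  "rhoPhi X k \<Phi> = {(a, \<xi>, l). a \<in> X \<and> (\<exists>F c. finite F \<and> F \<subseteq> {(\<eta>, m). (a, \<eta>, m) \<in> Phiprime X k \<Phi>}
      \<and> \<xi> = (\<lambda>P. \<Sum>(\<eta>, m)\<in>F. c (\<eta>, m) * \<eta> P) \<and> l = (\<Sum>(\<eta>, m)\<in>F. c (\<eta>, m) * m))}"

definition Phi0 :: "('n::finite) rv set \<Rightarrow> nat \<Rightarrow> ('n rv \<Rightarrow> real) \<Rightarrow> 'n phib" where
  "Phi0 X k f = {(a, \<lambda>P. c * deltaf k a P, c * f a) | a c. a \<in> X}"

definition pnabla :: "('n::finite) rv set \<Rightarrow> nat \<Rightarrow> ('n rv \<Rightarrow> real) \<Rightarrow> 'n phib" where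
  "pnabla X k f = (rhoPhi X k ^^ (2 * (card (mi k :: ('n \<Rightarrow> nat) set) + 1))) (Phi0 X k f)"

definition nabla_is_fun :: "('n::finite) rv set \<Rightarrow> nat \<Rightarrow> ('n rv \<Rightarrow> real) \<Rightarrow> bool" where
  "nabla_is_fun X k f = (\<forall>a\<in>X. \<forall>\<xi>. (a, \<xi>) \<in> ptau X k \<longrightarrow> (\<exists>!l. (a, \<xi>, l) \<in> pnabla X k f))"

definition nabla_val :: "('n::finite) rv set \<Rightarrow> nat \<Rightarrow> ('n rv \<Rightarrow> real) \<Rightarrow> 'n rv
    \<Rightarrow> (('n rv \<Rightarrow> real) \<Rightarrow> real) \<Rightarrow> real" where
  "nabla_val X k f a \<xi> = (THE l. (a, \<xi>, l) \<in> pnabla X k f)"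

definition nabla_zero_at :: "('n::finite) rv set \<Rightarrow> nat \<Rightarrow> ('n rv \<Rightarrow> real) \<Rightarrow> 'n rv \<Rightarrow> bool" where
  "nabla_zero_at X k f a = (\<forall>\<xi>. (a, \<xi>) \<in> ptau X k \<longrightarrow> nabla_val X k f a \<xi> = 0)"

definition pdi :: "'n::finite \<Rightarrow> ('n rv \<Rightarrow> real) \<Rightarrow> ('n rv \<Rightarrow> real)" where
  "pdi i F = (\<lambda>x. frechet_derivative F (at x) (axis i 1))"

fun Cp :: "nat \<Rightarrow> (('n::finite) rv \<Rightarrow> real) \<Rightarrow> bool" where
  "Cp 0 F = continuous_on UNIV F"
| "Cp (Suc p) F = (F differentiable_on UNIV \<and> (\<forall>i. Cp p (pdi i F)))"

fun pdl :: "'n::finite list \<Rightarrow> ('n rv \<Rightarrow> real) \<Rightarrow> ('n rv \<Rightarrow> real)" where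
  "pdl [] F = F"
| "pdl (i # is) F = pdi i (pdl is F)"

definition pda :: "('n::finite \<Rightarrow> nat) \<Rightarrow> ('n rv \<Rightarrow> real) \<Rightarrow> ('n rv \<Rightarrow> real)" where
  "pda \<alpha> F = pdl (SOME l. \<forall>i. count_list l i = \<alpha> i) F"

definition pflat :: "nat \<Rightarrow> (('n::finite) rv \<Rightarrow> real) \<Rightarrow> 'n rv \<Rightarrow> bool" where
  "pflat p F a = (\<forall>l. length l \<le> p \<longrightarrow> pdl l F a = 0)"

definition taylor :: "nat \<Rightarrow> ('n::finite) rv \<Rightarrow> ('n rv \<Rightarrow> real) \<Rightarrow> ('n rv \<Rightarrow> real)" where
  "taylor p a F = (\<lambda>x. \<Sum>\<alpha>\<in>mi p. pda \<alpha> F a / afact \<alpha> * mono_at a \<alpha> x)"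

text \<open>iota_a(xi) = xi o pi_a, with pi_a the truncation P_q -> P_p at a (= T^p_a restricted to P_q)\<close>
definition iota :: "nat \<Rightarrow> nat \<Rightarrow> ('n::finite) rv \<Rightarrow> (('n rv \<Rightarrow> real) \<Rightarrow> real) \<Rightarrow> (('n rv \<Rightarrow> real) \<Rightarrow> real)" where
  "iota q p a \<xi> = (\<lambda>P. if P \<in> Pk q then \<xi> (taylor p a P) else 0)"

definition tau_p :: "('n::finite) rv set \<Rightarrow> nat \<Rightarrow> nat \<Rightarrow> 'n rv \<Rightarrow> (('n rv \<Rightarrow> real) \<Rightarrow> real) set" where
  "tau_p X q p a = {\<xi> \<in> dualk p. (a, iota q p a \<xi>) \<in> ptau X q}"

definition Tcal_p :: "('n::finite) rv set \<Rightarrow> nat \<Rightarrow> nat \<Rightarrow> 'n rv \<Rightarrow> (('n rv \<Rightarrow> real) \<Rightarrow> real) set" where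
  "Tcal_p X s p a = {\<xi> \<in> dualk p. \<forall>h. Cp s h \<and> (\<forall>x\<in>X. h x = 0) \<longrightarrow> \<xi> (taylor p a h) = 0}"

text \<open>R^N represented as functions nat => real vanishing from N on\<close>
definition Rsp :: "nat \<Rightarrow> (nat \<Rightarrow> real) set" where
  "Rsp N = {x. \<forall>i\<ge>N. x i = 0}"

definition edist :: "nat \<Rightarrow> (nat \<Rightarrow> real) \<Rightarrow> (nat \<Rightarrow> real) \<Rightarrow> real" where
  "edist N x y = sqrt (\<Sum>i<N. (x i - y i)^2)"

definition Ropen :: "nat \<Rightarrow> (nat \<Rightarrow> real) set \<Rightarrow> bool" where
  "Ropen N U = (U \<subseteq> Rsp N \<and> (\<forall>x\<in>U. \<exists>r>0. \<forall>y\<in>Rsp N. edist N x y < r \<longrightarrow> y \<in> U))"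

definition mindex :: "nat \<Rightarrow> (nat \<Rightarrow> nat) set" where
  "mindex N = {\<alpha>. \<forall>i\<ge>N. \<alpha> i = 0}"

definition Rmono :: "nat \<Rightarrow> (nat \<Rightarrow> real) \<Rightarrow> (nat \<Rightarrow> nat) \<Rightarrow> (nat \<Rightarrow> real) \<Rightarrow> real" where
  "Rmono N x \<alpha> y = (\<Prod>i<N. (y i - x i) ^ (\<alpha> i))"

definition Ranalytic :: "nat \<Rightarrow> (nat \<Rightarrow> real) set \<Rightarrow> ((nat \<Rightarrow> real) \<Rightarrow> real) \<Rightarrow> bool" where
  "Ranalytic N U f = (\<forall>x\<in>U. \<exists>r>0. \<exists>c. \<forall>y\<in>Rsp N. edist N x y < r \<longrightarrow>
      ((\<lambda>\<alpha>. c \<alpha> * Rmono N x \<alpha> y) has_sum f y) (mindex N))"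

definition semianalytic :: "nat \<Rightarrow> (nat \<Rightarrow> real) set \<Rightarrow> bool" where
  "semianalytic N A = (A \<subseteq> Rsp N \<and> (\<forall>x\<in>Rsp N. \<exists>U. Ropen N U \<and> x \<in> U \<and>
      (\<exists>(I::nat set) (J::nat set) f g. finite I \<and> finite J \<and>
         (\<forall>i\<in>I. Ranalytic N U (f i)) \<and> (\<forall>i\<in>I. \<forall>j\<in>J. Ranalytic N U (g i j)) \<and>
         A \<inter> U = (\<Union>i\<in>I. {y\<in>U. f i y = 0 \<and> (\<forall>j\<in>J. g i j y > 0)}))))"

definition idx :: "'n::finite \<Rightarrow> nat" where
  "idx = (SOME e. bij_betw e (UNIV :: 'n set) {..<CARD('n)})"

definition proj_n :: "(nat \<Rightarrow> real) \<Rightarrow> ('n::finite) rv" where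
  "proj_n y = (\<chi> i. y (idx i))"

definition subanalytic :: "('n::finite) rv set \<Rightarrow> bool" where
  "subanalytic X = (\<forall>x. \<exists>U. open U \<and> x \<in> U \<and> (\<exists>m A. semianalytic (CARD('n) + m) A
      \<and> (\<exists>B. \<forall>y\<in>A. \<forall>i. \<bar>y i\<bar> \<le> B) \<and> X \<inter> U = proj_n ` A))"

end

theory Submission
  imports Defs "HOL-Library.Function_Algebras"
begin

(* Suppose \<xi> \<in> T^s_a(X)_p but \<iota>_a \<xi> \<notin> \<tau>^q_a(X). The fibre \<tau>^q_a(X) is a span, so by
   finite-dimensional duality some P \<in> P_q annihilates it while (\<iota>_a \<xi>)(P) = \<xi>(T^p_a P) \<noteq> 0.
   For a polynomial P the bundle \<nabla>^q P is the graph of \<eta> \<mapsto> \<eta>(P) over the iterates defining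
   \<tau>^q(X): each step (\<Delta>, closure, span) commutes with this graph, the closure because
   evaluation at P is Lipschitz on P_q^*. Hence \<nabla>^q P is a function on \<tau>^q(X) vanishing at a,
   and the hypothesis on q_X yields F \<in> C^s with F = P on X and F s-flat at a. Then
   P - F \<in> I^s(X) and T^p_a (P - F) = T^p_a P, so \<xi>(T^p_a P) = 0, a contradiction.
   Compactness, subanalyticity and q_X(p) \<ge> p are used only through the extension hypothesis. *)

section \<open>Polynomials of bounded degree\<close>

lemma finite_mi: "finite (mi k :: ('n::finite \<Rightarrow> nat) set)"
proof (rule finite_subset)
  show "mi k \<subseteq> PiE (UNIV::'n set) (\<lambda>_. {..k})"
  proof
    fix \<alpha> :: "'n \<Rightarrow> nat" assume "\<alpha> \<in> mi k"
    then have "\<alpha> i \<le> k" for i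
      using member_le_sum[of i UNIV \<alpha>] by (simp add: mi_def)
    then show "\<alpha> \<in> PiE UNIV (\<lambda>_. {..k})" by (auto simp: PiE_UNIV_domain)
  qed
qed (rule finite_PiE; simp)

lemma mi_mono: "m \<le> n \<Longrightarrow> mi m \<subseteq> mi n"
  unfolding mi_def by auto

lemma zero_in_mi: "(\<lambda>_. 0) \<in> mi k"
  by (simp add: mi_def)

lemma mdeg_le_of_mi: "\<alpha> \<in> mi k \<Longrightarrow> mdeg \<alpha> \<le> k"
  by (simp add: mi_def mdeg_def)

lemma Pk_add: "P \<in> Pk k \<Longrightarrow> Q \<in> Pk k \<Longrightarrow> (\<lambda>x. P x + Q x) \<in> Pk k"
  unfolding Pk_def
proof clarify
  fix c d
  show "\<exists>e. (\<lambda>x. (\<Sum>\<alpha>\<in>mi k. c \<alpha> * mono_at 0 \<alpha> x) + (\<Sum>\<alpha>\<in>mi k. d \<alpha> * mono_at 0 \<alpha> x))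
        = (\<lambda>x. \<Sum>\<alpha>\<in>mi k. e \<alpha> * mono_at 0 \<alpha> (x::'a rv))"
    by (rule exI[of _ "\<lambda>\<alpha>. c \<alpha> + d \<alpha>"]) (simp add: sum.distrib ring_distribs)
qed

lemma Pk_scale: "P \<in> Pk k \<Longrightarrow> (\<lambda>x. c * P x) \<in> Pk k"
  unfolding Pk_def
proof clarify
  fix d
  show "\<exists>e. (\<lambda>x. c * (\<Sum>\<alpha>\<in>mi k. d \<alpha> * mono_at 0 \<alpha> x))
        = (\<lambda>x. \<Sum>\<alpha>\<in>mi k. e \<alpha> * mono_at 0 \<alpha> (x::'a rv))"
    by (rule exI[of _ "\<lambda>\<alpha>. c * d \<alpha>"]) (simp add: sum_distrib_left mult.assoc)
qed

lemma mono_at_0_in_Pk: "\<alpha> \<in> mi k \<Longrightarrow> mono_at 0 \<alpha> \<in> Pk k"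
  unfolding Pk_def
proof (rule CollectI, rule exI[of _ "\<lambda>\<beta>. if \<beta> = \<alpha> then 1 else 0"])
  assume "\<alpha> \<in> mi k"
  then show "mono_at 0 \<alpha> = (\<lambda>x. \<Sum>\<beta>\<in>mi k. (if \<beta> = \<alpha> then 1 else 0) * mono_at 0 \<beta> x)"
    by (simp add: if_distrib[of "\<lambda>c. c * _"] finite_mi cong: if_cong)
qed

lemma Pk_const: "(\<lambda>x. c) \<in> Pk (k::nat)"
  using Pk_scale[OF mono_at_0_in_Pk[OF zero_in_mi], where c = c] by (simp add: mono_at_def)

lemma Pk_sum: "finite A \<Longrightarrow> (\<And>j. j \<in> A \<Longrightarrow> f j \<in> Pk k) \<Longrightarrow> (\<lambda>x. \<Sum>j\<in>A. f j x) \<in> Pk k"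
proof (induction A rule: finite_induct)
  case (insert j A)
  then show ?case using Pk_add[of "f j" k "\<lambda>x. \<Sum>j\<in>A. f j x"] by simp
qed (simp add: Pk_const)

lemma Pk_mono: "m \<le> n \<Longrightarrow> P \<in> Pk m \<Longrightarrow> P \<in> Pk n"
proof -
  assume "m \<le> n" "P \<in> Pk m"
  then obtain c where P: "P = (\<lambda>x. \<Sum>\<alpha>\<in>mi m. c \<alpha> * mono_at 0 \<alpha> x)"
    unfolding Pk_def by auto
  show ?thesis unfolding P
    by (intro Pk_sum finite_mi Pk_scale mono_at_0_in_Pk) (use mi_mono[OF \<open>m \<le> n\<close>] in blast)
qed

lemma mono_at_mult: "mono_at b \<alpha> x * mono_at b \<beta> x = mono_at b (\<lambda>i. \<alpha> i + \<beta> i) x"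
  unfolding mono_at_def by (simp add: prod.distrib[symmetric] power_add)

lemma Pk_mult:
  assumes "P \<in> Pk m" "Q \<in> Pk n"
  shows "(\<lambda>x. P x * Q x) \<in> Pk (m + n)"
proof -
  obtain c d where P: "P = (\<lambda>x. \<Sum>\<alpha>\<in>mi m. c \<alpha> * mono_at 0 \<alpha> x)"
    and Q: "Q = (\<lambda>x. \<Sum>\<beta>\<in>mi n. d \<beta> * mono_at 0 \<beta> x)"
    using assms unfolding Pk_def by auto
  have PQ: "(\<lambda>x. P x * Q x) = (\<lambda>x. \<Sum>\<alpha>\<in>mi m. \<Sum>\<beta>\<in>mi n. (c \<alpha> * d \<beta>) * mono_at 0 (\<lambda>i. \<alpha> i + \<beta> i) x)"
    unfolding P Q sum_product by (intro ext sum.cong refl) (simp add: mono_at_mult[symmetric] algebra_simps)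
  have mi_add: "(\<lambda>i. \<alpha> i + \<beta> i) \<in> mi (m + n)" if "\<alpha> \<in> mi m" "\<beta> \<in> mi n" for \<alpha> \<beta> :: "'a \<Rightarrow> nat"
    using that by (simp add: mi_def sum.distrib)
  show ?thesis unfolding PQ
    by (intro Pk_sum finite_mi Pk_scale mono_at_0_in_Pk mi_add)
qed

lemma Pk_prod: "finite I \<Longrightarrow> (\<And>i. i \<in> I \<Longrightarrow> f i \<in> Pk (d i)) \<Longrightarrow> (\<lambda>x. \<Prod>i\<in>I. f i x) \<in> Pk (\<Sum>i\<in>I. d i)"
proof (induction I rule: finite_induct)
  case (insert j I)
  then show ?case using Pk_mult[of "f j" "d j" "\<lambda>x. \<Prod>i\<in>I. f i x"] by simp
qed (simp add: Pk_const)

lemma Pk_power: "f \<in> Pk d \<Longrightarrow> (\<lambda>x. f x ^ m) \<in> Pk (d * m)"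
proof (induction m)
  case (Suc m)
  then show ?case using Pk_mult[of f d "\<lambda>x. f x ^ m" "d * m"] by (simp add: add.commute)
qed (simp add: Pk_const)

lemma Pk_coord: "(\<lambda>x. x $ i) \<in> Pk 1"
proof -
  let ?e = "\<lambda>j. if j = i then 1 else 0"
  have "mono_at 0 ?e = (\<lambda>x. x $ i)"
  proof
    fix x :: "'a rv"
    have "(\<Prod>j\<in>UNIV. (x $ j - 0 $ j) ^ ?e j) = (\<Prod>j\<in>UNIV. if j = i then x $ j else 1)"
      by (intro prod.cong) auto
    then show "mono_at 0 ?e x = x $ i" unfolding mono_at_def by simp
  qed
  moreover have "?e \<in> mi 1" by (simp add: mi_def)
  ultimately show ?thesis using mono_at_0_in_Pk by metis
qed

lemma mono_at_in_Pk: "mono_at a \<alpha> \<in> Pk (mdeg \<alpha>)"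
proof -
  have "(\<lambda>x. x $ i - a $ i) \<in> Pk 1" for i
    using Pk_add[OF Pk_coord[of i] Pk_const[of "- a $ i" 1]] by simp
  then have "(\<lambda>x. \<Prod>i\<in>UNIV. (x $ i - a $ i) ^ \<alpha> i) \<in> Pk (\<Sum>i\<in>UNIV. 1 * \<alpha> i)"
    by (intro Pk_prod Pk_power) auto
  then show ?thesis by (simp add: mono_at_def[abs_def] mdeg_def)
qed

lemma taylor_in_Pk: "taylor p a G \<in> Pk p"
  unfolding taylor_def
  by (intro Pk_sum finite_mi Pk_scale Pk_mono[OF mdeg_le_of_mi mono_at_in_Pk])

section \<open>Smoothness of polynomials\<close>

inductive_set poly_fun :: "('n::finite rv \<Rightarrow> real) set" where
  const: "(\<lambda>x. c) \<in> poly_fun"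
| coord: "(\<lambda>x. x $ i) \<in> poly_fun"
| add: "f \<in> poly_fun \<Longrightarrow> g \<in> poly_fun \<Longrightarrow> (\<lambda>x. f x + g x) \<in> poly_fun"
| mult: "f \<in> poly_fun \<Longrightarrow> g \<in> poly_fun \<Longrightarrow> (\<lambda>x. f x * g x) \<in> poly_fun"

lemma pdi_eq_derivative:
  assumes "\<And>x. (F has_derivative D x) (at x)"
  shows "pdi i F = (\<lambda>x. D x (axis i 1))"
  unfolding pdi_def using frechet_derivative_at[OF assms] by metis

lemma poly_fun_has_derivative:
  "f \<in> poly_fun \<Longrightarrow>
    \<exists>D. (\<forall>x. (f has_derivative D x) (at x)) \<and> (\<forall>i. (\<lambda>x. D x (axis i 1)) \<in> poly_fun)"
proof (induction f rule: poly_fun.induct)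
  case (const c)
  show ?case
    by (rule exI[of _ "\<lambda>_ _. 0"]) (simp add: poly_fun.const)
next
  case (coord j)
  have "((\<lambda>x. x $ j) has_derivative (\<lambda>h. h $ j)) (at x)" for x :: "'a rv"
    by (rule bounded_linear_imp_has_derivative) (rule bounded_linear_vec_nth)
  then show ?case
    by (intro exI[of _ "\<lambda>_ h. h $ j"]) (simp add: poly_fun.const)
next
  case (add f g)
  then obtain Df Dg where "\<forall>x. (f has_derivative Df x) (at x)" "\<forall>i. (\<lambda>x. Df x (axis i 1)) \<in> poly_fun"
    "\<forall>x. (g has_derivative Dg x) (at x)" "\<forall>i. (\<lambda>x. Dg x (axis i 1)) \<in> poly_fun"
    by blast
  then show ?case
    by (intro exI[of _ "\<lambda>x h. Df x h + Dg x h"]) (simp add: poly_fun.add)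
next
  case (mult f g)
  then obtain Df Dg where "\<forall>x. (f has_derivative Df x) (at x)" "\<forall>i. (\<lambda>x. Df x (axis i 1)) \<in> poly_fun"
    "\<forall>x. (g has_derivative Dg x) (at x)" "\<forall>i. (\<lambda>x. Dg x (axis i 1)) \<in> poly_fun"
    by blast
  with mult.hyps show ?case
    by (intro exI[of _ "\<lambda>x h. f x * Dg x h + Df x h * g x"])
      (simp add: poly_fun.add poly_fun.mult)
qed

lemma poly_fun_Cp: "f \<in> poly_fun \<Longrightarrow> Cp m f"
proof (induction m arbitrary: f)
  case 0
  then obtain D where "\<forall>x. (f has_derivative D x) (at x)"
    using poly_fun_has_derivative by blast
  then have "isCont f x" for x
    using has_derivative_continuous by blast
  then show ?case
    by (simp add: continuous_at_imp_continuous_on)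
next
  case (Suc m)
  then obtain D where D: "\<forall>x. (f has_derivative D x) (at x)" "\<forall>i. (\<lambda>x. D x (axis i 1)) \<in> poly_fun"
    using poly_fun_has_derivative by blast
  then have "f differentiable_on UNIV"
    by (meson differentiableI differentiable_at_imp_differentiable_on)
  moreover have "Cp m (pdi i f)" for i
    using Suc.IH D pdi_eq_derivative[of f D i] by simp
  ultimately show ?case by simp
qed

lemma poly_fun_sum:
  "finite A \<Longrightarrow> (\<And>j. j \<in> A \<Longrightarrow> f j \<in> poly_fun) \<Longrightarrow> (\<lambda>x. \<Sum>j\<in>A. f j x) \<in> poly_fun"
  by (induction A rule: finite_induct) (auto intro: poly_fun.intros)

lemma poly_fun_prod:
  "finite A \<Longrightarrow> (\<And>j. j \<in> A \<Longrightarrow> f j \<in> poly_fun) \<Longrightarrow> (\<lambda>x. \<Prod>j\<in>A. f j x) \<in> poly_fun"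
  by (induction A rule: finite_induct) (auto intro: poly_fun.intros)

lemma poly_fun_power: "f \<in> poly_fun \<Longrightarrow> (\<lambda>x. f x ^ m) \<in> poly_fun"
  by (induction m) (auto intro: poly_fun.intros)

lemma Pk_subset_poly_fun: "Pk k \<subseteq> poly_fun"
proof
  fix P :: "'n::finite rv \<Rightarrow> real" assume "P \<in> Pk k"
  then obtain c where P: "P = (\<lambda>x. \<Sum>\<alpha>\<in>mi k. c \<alpha> * mono_at 0 \<alpha> x)"
    unfolding Pk_def by auto
  have "mono_at 0 \<alpha> \<in> poly_fun" for \<alpha> :: "'n \<Rightarrow> nat"
    by (simp add: mono_at_def[abs_def]) (intro poly_fun_prod finite poly_fun_power poly_fun.coord)
  then show "P \<in> poly_fun"
    unfolding P by (intro poly_fun_sum finite_mi poly_fun.mult poly_fun.const)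
qed

lemma Pk_Cp: "P \<in> Pk k \<Longrightarrow> Cp m P"
  using Pk_subset_poly_fun poly_fun_Cp by blast

section \<open>Linearity of derivatives and Taylor polynomials\<close>

lemma Cp_pdl: "Cp m F \<Longrightarrow> length l \<le> m \<Longrightarrow> Cp (m - length l) (pdl l F)"
proof (induction l)
  case (Cons i l)
  then have "Cp (Suc (m - length (i # l))) (pdl l F)"
    by (simp add: Suc_diff_Suc)
  then show ?case by simp
qed simp

lemma Cp_Suc_imp_differentiable: "Cp (Suc m) F \<Longrightarrow> F differentiable (at x)"
  by (simp add: differentiable_on_def)

lemma pdi_lincomb:
  assumes "\<And>x. F differentiable (at x)" "\<And>x. G differentiable (at x)"
  shows "pdi i (\<lambda>x. c * F x + d * G x) = (\<lambda>x. c * pdi i F x + d * pdi i G x)"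
proof -
  have "((\<lambda>x. c * F x + d * G x) has_derivative
      (\<lambda>h. c * frechet_derivative F (at x) h + d * frechet_derivative G (at x) h)) (at x)" for x
    using assms[of x] unfolding frechet_derivative_works
    by (intro has_derivative_add has_derivative_mult_right)
  from pdi_eq_derivative[OF this, of i] show ?thesis
    by (simp add: pdi_def)
qed

lemma Cp_lincomb: "Cp m F \<Longrightarrow> Cp m G \<Longrightarrow> Cp m (\<lambda>x. c * F x + d * G x)"
proof (induction m arbitrary: F G)
  case 0
  then show ?case by (simp add: continuous_on_add continuous_on_mult_left)
next
  case (Suc m)
  have "\<And>x. F differentiable (at x)" "\<And>x. G differentiable (at x)"
    using Suc.prems by (auto intro: Cp_Suc_imp_differentiable)
  then have "Cp m (pdi i (\<lambda>x. c * F x + d * G x))" for i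
    using Suc.IH[of "pdi i F" "pdi i G"] Suc.prems by (simp add: pdi_lincomb)
  moreover have "(\<lambda>x. c * F x + d * G x) differentiable_on UNIV"
    using Suc.prems by simp
  ultimately show ?case by simp
qed

lemma Cp_diff: "Cp m F \<Longrightarrow> Cp m G \<Longrightarrow> Cp m (\<lambda>x. F x - G x)"
  using Cp_lincomb[of m F G 1 "-1"] by simp

lemma pdl_lincomb:
  "Cp m F \<Longrightarrow> Cp m G \<Longrightarrow> length l \<le> m \<Longrightarrow>
    pdl l (\<lambda>x. c * F x + d * G x) = (\<lambda>x. c * pdl l F x + d * pdl l G x)"
proof (induction l)
  case (Cons i l)
  then have "Cp (Suc (m - length (i # l))) (pdl l F)" "Cp (Suc (m - length (i # l))) (pdl l G)"
    using Cp_pdl[of m _ l] by (simp_all add: Suc_diff_Suc)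
  then have "\<And>x. pdl l F differentiable (at x)" "\<And>x. pdl l G differentiable (at x)"
    by (auto intro: Cp_Suc_imp_differentiable)
  with Cons show ?case
    by (simp add: pdi_lincomb)
qed simp

lemma exists_list_count: "\<exists>l. \<forall>i::'n::finite. count_list l i = \<alpha> i"
proof -
  obtain xs where xs: "set xs = (UNIV::'n set)" "distinct xs"
    using finite_distinct_list[of "UNIV::'n set"] by auto
  have "distinct ys \<Longrightarrow> count_list (concat (map (\<lambda>i. replicate (\<alpha> i) i) ys)) j
      = (if j \<in> set ys then \<alpha> j else 0)" for ys j
    by (induction ys) (auto simp: count_list_eq_length_filter filter_replicate)
  with xs have "\<forall>i. count_list (concat (map (\<lambda>i. replicate (\<alpha> i) i) xs)) i = \<alpha> i"
    by simp
  then show ?thesis ..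
qed

lemma pda_eq_pdl: "\<exists>l. pda \<alpha> = pdl l \<and> length l = mdeg \<alpha>"
proof -
  let ?l = "SOME l. \<forall>i. count_list l i = \<alpha> i"
  have "\<forall>i. count_list ?l i = \<alpha> i"
    using someI_ex[OF exists_list_count[of \<alpha>]] .
  then have "length ?l = mdeg \<alpha>"
    using sum_count_set[of ?l "UNIV::'a set"] by (simp add: mdeg_def)
  moreover have "pda \<alpha> = pdl ?l"
    by (simp add: pda_def[abs_def])
  ultimately show ?thesis by blast
qed

lemma taylor_lincomb:
  assumes "Cp m F" "Cp m G" "p \<le> m"
  shows "taylor p a (\<lambda>x. c * F x + d * G x) = (\<lambda>x. c * taylor p a F x + d * taylor p a G x)"
proof -
  have "pda \<alpha> (\<lambda>x. c * F x + d * G x) = (\<lambda>x. c * pda \<alpha> F x + d * pda \<alpha> G x)" if "\<alpha> \<in> mi p" for \<alpha>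
  proof -
    obtain l where "pda \<alpha> = pdl l" "length l = mdeg \<alpha>"
      using pda_eq_pdl by blast
    with assms mdeg_le_of_mi[OF that] show ?thesis
      by (simp add: pdl_lincomb)
  qed
  then show ?thesis
    unfolding taylor_def
    by (simp add: sum.distrib sum_distrib_left algebra_simps add_divide_distrib)
qed

lemma taylor_flat: "pflat s F a \<Longrightarrow> p \<le> s \<Longrightarrow> taylor p a F = (\<lambda>x. 0)"
proof -
  assume flat: "pflat s F a" and "p \<le> s"
  have "pda \<alpha> F a = 0" if "\<alpha> \<in> mi p" for \<alpha>
  proof -
    obtain l where "pda \<alpha> = pdl l" "length l = mdeg \<alpha>"
      using pda_eq_pdl by blast
    with flat \<open>p \<le> s\<close> mdeg_le_of_mi[OF that] show ?thesis
      by (simp add: pflat_def)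
  qed
  then show ?thesis by (simp add: taylor_def)
qed

lemma taylor_diff_flat:
  assumes "Cp s G" "Cp s F" "pflat s F a" "p \<le> s"
  shows "taylor p a (\<lambda>x. G x - F x) = taylor p a G"
  using taylor_lincomb[OF assms(1,2,4), of a 1 "-1"] taylor_flat[OF assms(3,4)] by simp

section \<open>The dual space of polynomials\<close>

lemma dualk_additive: "\<eta> \<in> dualk k \<Longrightarrow> P \<in> Pk k \<Longrightarrow> Q \<in> Pk k \<Longrightarrow> \<eta> (\<lambda>x. P x + Q x) = \<eta> P + \<eta> Q"
  unfolding dualk_def by blast

lemma dualk_homogeneous: "\<eta> \<in> dualk k \<Longrightarrow> P \<in> Pk k \<Longrightarrow> \<eta> (\<lambda>x. c * P x) = c * \<eta> P"
  unfolding dualk_def by blast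

lemma dualk_outside: "\<eta> \<in> dualk k \<Longrightarrow> P \<notin> Pk k \<Longrightarrow> \<eta> P = 0"
  unfolding dualk_def by blast

lemma dualk_monomial_expansion:
  assumes "\<eta> \<in> dualk k" "A \<subseteq> mi k"
  shows "\<eta> (\<lambda>x. \<Sum>\<alpha>\<in>A. c \<alpha> * mono_at 0 \<alpha> x) = (\<Sum>\<alpha>\<in>A. c \<alpha> * \<eta> (mono_at 0 \<alpha>))"
proof -
  have "finite A" using assms(2) finite_mi finite_subset by blast
  then show ?thesis using assms(2)
  proof (induction A rule: finite_induct)
    case empty
    have "\<eta> (\<lambda>x. 0 * 1) = 0 * \<eta> (\<lambda>x. 1)"
      by (rule dualk_homogeneous[OF assms(1) Pk_const])
    then show ?case by simp
  next
    case (insert \<beta> A)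
    then have "mono_at 0 \<beta> \<in> Pk k" "(\<lambda>x. \<Sum>\<alpha>\<in>A. c \<alpha> * mono_at 0 \<alpha> x) \<in> Pk k"
      by (auto intro!: mono_at_0_in_Pk Pk_sum Pk_scale)
    with insert show ?case
      by (simp add: dualk_additive[OF assms(1) Pk_scale] dualk_homogeneous[OF assms(1)])
  qed
qed

lemma dualk_eqI:
  assumes "\<eta> \<in> dualk k" "\<eta>' \<in> dualk k" "\<And>\<alpha>. \<alpha> \<in> mi k \<Longrightarrow> \<eta> (mono_at 0 \<alpha>) = \<eta>' (mono_at 0 \<alpha>)"
  shows "\<eta> = \<eta>'"
proof
  fix P
  show "\<eta> P = \<eta>' P"
  proof (cases "P \<in> Pk k")
    case True
    then obtain c where "P = (\<lambda>x. \<Sum>\<alpha>\<in>mi k. c \<alpha> * mono_at 0 \<alpha> x)"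
      unfolding Pk_def by auto
    with assms show ?thesis
      by (simp add: dualk_monomial_expansion)
  next
    case False
    with assms show ?thesis by (simp add: dualk_outside)
  qed
qed

lemma dualk_eval_lipschitz:
  assumes "P \<in> Pk k"
  shows "\<exists>C\<ge>1. \<forall>\<eta>\<in>dualk k. \<forall>\<eta>'\<in>dualk k. \<bar>\<eta> P - \<eta>' P\<bar> \<le> C * ddist k \<eta> \<eta>'"
proof -
  obtain c where P: "P = (\<lambda>x. \<Sum>\<alpha>\<in>mi k. c \<alpha> * mono_at 0 \<alpha> x)"
    using assms unfolding Pk_def by auto
  define C where "C = (\<Sum>\<alpha>\<in>mi k. \<bar>c \<alpha>\<bar>) + 1"
  have "C \<ge> 1" unfolding C_def by (simp add: sum_nonneg)
  moreover have "\<bar>\<eta> P - \<eta>' P\<bar> \<le> C * ddist k \<eta> \<eta>'" if "\<eta> \<in> dualk k" "\<eta>' \<in> dualk k" for \<eta> \<eta>'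
  proof -
    from that have "\<bar>\<eta> P - \<eta>' P\<bar> = \<bar>\<Sum>\<alpha>\<in>mi k. c \<alpha> * (\<eta> (mono_at 0 \<alpha>) - \<eta>' (mono_at 0 \<alpha>))\<bar>"
      by (simp add: P dualk_monomial_expansion sum_subtractf right_diff_distrib)
    also have "\<dots> \<le> (\<Sum>\<alpha>\<in>mi k. \<bar>c \<alpha>\<bar> * ddist k \<eta> \<eta>')"
    proof (rule order_trans[OF sum_abs sum_mono])
      fix \<alpha> :: "'a \<Rightarrow> nat" assume "\<alpha> \<in> mi k"
      then have "\<bar>\<eta> (mono_at 0 \<alpha>) - \<eta>' (mono_at 0 \<alpha>)\<bar> \<le> ddist k \<eta> \<eta>'"
        unfolding ddist_def by (rule member_le_sum) (simp_all add: finite_mi)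
      then show "\<bar>c \<alpha> * (\<eta> (mono_at 0 \<alpha>) - \<eta>' (mono_at 0 \<alpha>))\<bar> \<le> \<bar>c \<alpha>\<bar> * ddist k \<eta> \<eta>'"
        by (simp add: abs_mult mult_left_mono)
    qed
    also have "\<dots> \<le> C * ddist k \<eta> \<eta>'"
      unfolding C_def sum_distrib_right[symmetric]
      by (rule mult_right_mono) (simp_all add: ddist_def sum_nonneg)
    finally show ?thesis .
  qed
  ultimately show ?thesis by blast
qed

lemma dualk_add: "\<eta> \<in> dualk k \<Longrightarrow> \<eta>' \<in> dualk k \<Longrightarrow> (\<lambda>P. \<eta> P + \<eta>' P) \<in> dualk k"
  unfolding dualk_def by (auto simp: algebra_simps)

lemma dualk_scale: "\<eta> \<in> dualk k \<Longrightarrow> (\<lambda>P. c * \<eta> P) \<in> dualk k"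
  unfolding dualk_def by (auto simp: algebra_simps)

lemma dualk_sum: "finite F \<Longrightarrow> F \<subseteq> dualk k \<Longrightarrow> (\<lambda>P. \<Sum>\<eta>\<in>F. c \<eta> * \<eta> P) \<in> dualk k"
proof (induction F rule: finite_induct)
  case empty
  then show ?case by (simp add: dualk_def)
next
  case (insert \<eta> F)
  then show ?case
    by (simp add: dualk_add dualk_scale)
qed

lemma deltaf_in_dualk: "deltaf k a \<in> dualk k"
  unfolding dualk_def deltaf_def by (simp add: Pk_add Pk_scale)

lemma iota_in_dualk:
  assumes "\<xi> \<in> dualk p"
  shows "iota q p a \<xi> \<in> dualk q"
proof -
  have taylor: "taylor p a (\<lambda>x. c * P x + d * Q x) = (\<lambda>x. c * taylor p a P x + d * taylor p a Q x)"
    if "P \<in> Pk q" "Q \<in> Pk q" for P Q c d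
    using that by (intro taylor_lincomb[of p] Pk_Cp) simp_all
  have "taylor p a (\<lambda>x. P x + Q x) = (\<lambda>x. taylor p a P x + taylor p a Q x)"
    and "taylor p a (\<lambda>x. c * P x) = (\<lambda>x. c * taylor p a P x)"
    if "P \<in> Pk q" "Q \<in> Pk q" for P Q c
    using taylor[OF that, of 1 1] taylor[OF that, of c 0] by simp_all
  with assms show ?thesis
    unfolding dualk_def[of q] iota_def
    by (simp add: Pk_add Pk_scale dualk_additive dualk_homogeneous taylor_in_Pk)
qed

lemma fspan_zero: "(\<lambda>P. 0) \<in> fspan S"
  unfolding fspan_def by (auto intro!: exI[of _ "{}"])

lemma fspan_base: "\<eta> \<in> S \<Longrightarrow> \<eta> \<in> fspan S"
  unfolding fspan_def by (auto intro!: exI[of _ "{\<eta>}"] exI[of _ "\<lambda>_. 1"])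

lemma fspan_scale: "\<eta> \<in> fspan S \<Longrightarrow> (\<lambda>P. c * \<eta> P) \<in> fspan S"
  unfolding fspan_def
  by (auto simp: sum_distrib_left mult.assoc intro!: exI[of _ "\<lambda>\<eta>. c * _ \<eta>"])

lemma fspan_add:
  assumes "\<eta> \<in> fspan S" "\<eta>' \<in> fspan S"
  shows "(\<lambda>P. \<eta> P + \<eta>' P) \<in> fspan S"
proof -
  obtain F c F' c' where F: "finite F" "F \<subseteq> S" "\<eta> = (\<lambda>P. \<Sum>\<theta>\<in>F. c \<theta> * \<theta> P)"
    and F': "finite F'" "F' \<subseteq> S" "\<eta>' = (\<lambda>P. \<Sum>\<theta>\<in>F'. c' \<theta> * \<theta> P)"
    using assms unfolding fspan_def by blast
  define e where "e \<theta> = (if \<theta> \<in> F then c \<theta> else 0) + (if \<theta> \<in> F' then c' \<theta> else 0)" for \<theta>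
  have "(\<Sum>\<theta>\<in>F \<union> F'. e \<theta> * \<theta> P) = (\<Sum>\<theta>\<in>F. c \<theta> * \<theta> P) + (\<Sum>\<theta>\<in>F'. c' \<theta> * \<theta> P)" for P
  proof -
    have "(\<Sum>\<theta>\<in>F \<union> F'. e \<theta> * \<theta> P) = (\<Sum>\<theta>\<in>F \<union> F'. (if \<theta> \<in> F then c \<theta> * \<theta> P else 0))
        + (\<Sum>\<theta>\<in>F \<union> F'. (if \<theta> \<in> F' then c' \<theta> * \<theta> P else 0))"
      unfolding sum.distrib[symmetric] by (intro sum.cong) (auto simp: e_def algebra_simps)
    also have "\<dots> = (\<Sum>\<theta>\<in>F. c \<theta> * \<theta> P) + (\<Sum>\<theta>\<in>F'. c' \<theta> * \<theta> P)"
      using F(1) F'(1) by (simp add: sum.inter_restrict[symmetric] Int_absorb1 Int_absorb2)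
    finally show ?thesis .
  qed
  with F F' show ?thesis
    unfolding fspan_def by (auto intro!: exI[of _ "F \<union> F'"] exI[of _ e])
qed

lemma fspan_subset_dualk: "S \<subseteq> dualk k \<Longrightarrow> fspan S \<subseteq> dualk k"
  unfolding fspan_def using dualk_sum by blast

lemma fspan_annihilated: "(\<And>\<eta>. \<eta> \<in> S \<Longrightarrow> \<eta> P = 0) \<Longrightarrow> \<eta> \<in> fspan S \<Longrightarrow> \<eta> P = 0"
  unfolding fspan_def by (auto intro!: sum.neutral)

lemma fspan_sum:
  "finite F \<Longrightarrow> (\<And>x. x \<in> F \<Longrightarrow> f x \<in> S) \<Longrightarrow> (\<lambda>P. \<Sum>x\<in>F. c x * f x P) \<in> fspan S"
proof (induction F rule: finite_induct)
  case empty
  then show ?case using fspan_zero by simp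
next
  case (insert x F)
  then have "(\<lambda>P. c x * f x P + (\<Sum>x\<in>F. c x * f x P)) \<in> fspan S"
    by (intro fspan_add[OF fspan_scale[OF fspan_base]]) auto
  with insert.hyps show ?case by simp
qed

section \<open>Annihilators of spans in the dual space\<close>

definition scale_fun :: "real \<Rightarrow> ('a \<Rightarrow> real) \<Rightarrow> 'a \<Rightarrow> real" where
  "scale_fun c u = (\<lambda>x. c * u x)"

lemma vector_space_scale_fun: "vector_space scale_fun"
  by unfold_locales (auto simp: scale_fun_def algebra_simps)

lemma sum_fun_apply: "(\<Sum>a\<in>A. f a) x = (\<Sum>a\<in>A. f a x)"
  by (induction A rule: infinite_finite_induct) auto

lemma separating_linear_functional:
  fixes scale :: "real \<Rightarrow> 'b::ab_group_add \<Rightarrow> 'b"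
  assumes "vector_space scale" and "v \<notin> module.span scale S"
  shows "\<exists>g. Vector_Spaces.linear scale (scaleR :: real \<Rightarrow> real \<Rightarrow> real) g \<and> g v = 1 \<and> (\<forall>u\<in>S. g u = 0)"
proof -
  interpret V: vector_space scale by fact
  interpret VP: vector_space_pair scale "scaleR :: real \<Rightarrow> real \<Rightarrow> real"
    by (simp add: vector_space_pair_def assms(1) real_vector.vector_space_axioms)
  obtain B where B: "B \<subseteq> S" "V.independent B" "S \<subseteq> V.span B"
    by (rule V.maximal_independent_subset[of S])
  then have "v \<notin> V.span B"
    using assms(2) V.span_mono by blast
  with B have "V.independent (insert v B)"
    by (simp add: V.independent_insertI)
  then obtain g where g: "Vector_Spaces.linear scale (scaleR :: real \<Rightarrow> real \<Rightarrow> real) g"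
    "\<And>x. x \<in> insert v B \<Longrightarrow> g x = (if x = v then 1 else 0)"
    using VP.linear_independent_extend[of "insert v B" "\<lambda>x. if x = v then 1 else 0"] by blast
  have "g x = 0" if "x \<in> B" for x
    using g(2) that \<open>v \<notin> V.span B\<close> V.span_base by fastforce
  then have "g u = 0" if "u \<in> S" for u
    using VP.linear_eq_0_on_span[OF g(1)] B(3) that by blast
  with g show ?thesis by auto
qed

definition dual_coords :: "nat \<Rightarrow> (('n::finite rv \<Rightarrow> real) \<Rightarrow> real) \<Rightarrow> ('n \<Rightarrow> nat) \<Rightarrow> real" where
  "dual_coords k \<eta> = (\<lambda>\<alpha>. if \<alpha> \<in> mi k then \<eta> (mono_at 0 \<alpha>) else 0)"

lemma dual_coords_zero: "dual_coords k (\<lambda>P. 0) = 0"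
  by (simp add: dual_coords_def fun_eq_iff)

lemma dual_coords_add: "dual_coords k (\<lambda>P. \<eta> P + \<eta>' P) = dual_coords k \<eta> + dual_coords k \<eta>'"
  by (simp add: dual_coords_def fun_eq_iff)

lemma dual_coords_scale: "dual_coords k (\<lambda>P. c * \<eta> P) = scale_fun c (dual_coords k \<eta>)"
  by (simp add: dual_coords_def scale_fun_def fun_eq_iff)

lemma dual_coords_expansion:
  "dual_coords k \<eta> = (\<Sum>\<alpha>\<in>mi k. scale_fun (\<eta> (mono_at 0 \<alpha>)) (\<lambda>\<beta>. if \<beta> = \<alpha> then 1 else 0))"
proof
  fix \<beta>
  have "(\<Sum>\<alpha>\<in>mi k. scale_fun (\<eta> (mono_at 0 \<alpha>)) (\<lambda>\<beta>. if \<beta> = \<alpha> then 1 else 0)) \<beta>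
      = (\<Sum>\<alpha>\<in>mi k. if \<beta> = \<alpha> then \<eta> (mono_at 0 \<alpha>) else 0)"
    unfolding sum_fun_apply scale_fun_def by (intro sum.cong) auto
  then show "dual_coords k \<eta> \<beta> = (\<Sum>\<alpha>\<in>mi k. scale_fun (\<eta> (mono_at 0 \<alpha>)) (\<lambda>\<beta>. if \<beta> = \<alpha> then 1 else 0)) \<beta>"
    by (simp add: dual_coords_def finite_mi)
qed

lemma dual_coords_inj_on: "inj_on (dual_coords k :: (('n::finite rv \<Rightarrow> real) \<Rightarrow> real) \<Rightarrow> _) (dualk k)"
proof (rule inj_onI)
  fix \<eta> \<eta>' :: "('n rv \<Rightarrow> real) \<Rightarrow> real"
  assume \<eta>: "\<eta> \<in> dualk k" "\<eta>' \<in> dualk k" and eq: "dual_coords k \<eta> = dual_coords k \<eta>'"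
  have "\<eta> (mono_at 0 \<alpha>) = \<eta>' (mono_at 0 \<alpha>)" if "\<alpha> \<in> mi k" for \<alpha>
    using fun_cong[OF eq, of \<alpha>] that by (simp add: dual_coords_def)
  with \<eta> show "\<eta> = \<eta>'"
    by (rule dualk_eqI)
qed

(* In coordinates on the monomials the separating functional becomes evaluation at a polynomial. *)
lemma dualk_separation:
  fixes S :: "(('n::finite rv \<Rightarrow> real) \<Rightarrow> real) set"
  assumes S: "S \<subseteq> dualk k" and \<zeta>: "\<zeta> \<in> dualk k" "\<zeta> \<notin> fspan S"
  shows "\<exists>P\<in>Pk k. (\<forall>\<eta>\<in>S. \<eta> P = 0) \<and> \<zeta> P \<noteq> 0"
proof -
  interpret V: vector_space "scale_fun :: real \<Rightarrow> (('n \<Rightarrow> nat) \<Rightarrow> real) \<Rightarrow> _"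
    by (rule vector_space_scale_fun)
  let ?V = "dual_coords k ` fspan S"
  have "V.subspace ?V"
  proof (rule V.subspaceI)
    show "0 \<in> ?V"
      using imageI[OF fspan_zero, of "dual_coords k"] by (simp add: dual_coords_zero)
  next
    fix x y assume "x \<in> ?V" "y \<in> ?V"
    then obtain \<eta> \<eta>' where \<eta>: "\<eta> \<in> fspan S" "\<eta>' \<in> fspan S" and "x = dual_coords k \<eta>" "y = dual_coords k \<eta>'"
      by blast
    then show "x + y \<in> ?V"
      using imageI[OF fspan_add[OF \<eta>], of "dual_coords k"] by (simp add: dual_coords_add)
  next
    fix c x assume "x \<in> ?V"
    then obtain \<eta> where \<eta>: "\<eta> \<in> fspan S" and "x = dual_coords k \<eta>"
      by blast
    then show "scale_fun c x \<in> ?V"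
      using imageI[OF fspan_scale[OF \<eta>], of "dual_coords k"] by (simp add: dual_coords_scale)
  qed
  moreover have "dual_coords k ` S \<subseteq> ?V"
    using fspan_base by blast
  ultimately have "V.span (dual_coords k ` S) \<subseteq> ?V"
    by (rule V.span_minimal[rotated])
  moreover have "dual_coords k \<zeta> \<notin> ?V"
    using inj_on_image_mem_iff[OF dual_coords_inj_on \<zeta>(1) fspan_subset_dualk[OF S]] \<zeta>(2) by simp
  ultimately have "dual_coords k \<zeta> \<notin> V.span (dual_coords k ` S)"
    by blast
  then obtain g where g: "Vector_Spaces.linear scale_fun (scaleR :: real \<Rightarrow> real \<Rightarrow> real) g"
    "g (dual_coords k \<zeta>) = 1" "\<forall>u\<in>dual_coords k ` S. g u = 0"
    using separating_linear_functional[OF vector_space_scale_fun] by blast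
  interpret VP: vector_space_pair "scale_fun :: real \<Rightarrow> (('n \<Rightarrow> nat) \<Rightarrow> real) \<Rightarrow> _" "scaleR :: real \<Rightarrow> real \<Rightarrow> real"
    by (simp add: vector_space_pair_def vector_space_scale_fun real_vector.vector_space_axioms)
  define P where "P = (\<lambda>x. \<Sum>\<alpha>\<in>mi k. g (\<lambda>\<beta>. if \<beta> = \<alpha> then 1 else 0) * mono_at 0 \<alpha> x)"
  have eval: "\<eta> P = g (dual_coords k \<eta>)" if "\<eta> \<in> dualk k" for \<eta>
    unfolding P_def dualk_monomial_expansion[OF that order_refl] dual_coords_expansion
      VP.linear_sum[OF g(1)] VP.linear_scale[OF g(1)]
    by (simp add: mult.commute)
  have "P \<in> Pk k"
    unfolding P_def Pk_def by (rule CollectI, rule exI, rule refl)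
  moreover have "\<eta> P = 0" if "\<eta> \<in> S" for \<eta>
  proof -
    have "\<eta> P = g (dual_coords k \<eta>)"
      using S that by (intro eval) blast
    also have "\<dots> = 0"
      using g(3) that by blast
    finally show ?thesis .
  qed
  moreover have "\<zeta> P \<noteq> 0"
    using eval g(2) \<zeta>(1) by simp
  ultimately show ?thesis
    by blast
qed

section \<open>The bundle \<open>\<nabla>\<^sup>k P\<close> of a polynomial\<close>

definition eval_graph :: "('n::finite rv \<Rightarrow> real) \<Rightarrow> ('n rv \<times> (('n rv \<Rightarrow> real) \<Rightarrow> real)) set \<Rightarrow> 'n phib" where
  "eval_graph P E = {(a, \<xi>, l). (a, \<xi>) \<in> E \<and> l = \<xi> P}"

lemma Phi0_eq_eval_graph: "P \<in> Pk k \<Longrightarrow> Phi0 X k P = eval_graph P (E0 X k)"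
  unfolding Phi0_def eval_graph_def E0_def deltaf_def by auto

lemma DeltaPhi_eval_graph:
  "DeltaPhi X k (eval_graph P E) = {(a, b, \<zeta>, \<nu>). (a, b, \<zeta>) \<in> DeltaE X k E \<and> \<nu> = \<zeta> P}"
  unfolding DeltaPhi_def DeltaE_def eval_graph_def by auto

lemma DeltaE_in_dualk: "E \<subseteq> X \<times> dualk k \<Longrightarrow> (a, b, \<zeta>) \<in> DeltaE X k E \<Longrightarrow> \<zeta> \<in> dualk k"
  unfolding DeltaE_def using dualk_add by blast

lemma mem_Phiprime_eval_graph:
  "(a, \<xi>, l) \<in> Phiprime X k (eval_graph P E) \<longleftrightarrow> a \<in> X \<and> \<xi> \<in> dualk k \<and>
    (\<forall>\<epsilon>>0. \<exists>a1 b1 \<zeta>. (a1, b1, \<zeta>) \<in> DeltaE X k E \<and> dist a1 a < \<epsilon> \<and> dist b1 a < \<epsilon>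
      \<and> ddist k \<zeta> \<xi> < \<epsilon> \<and> \<bar>\<zeta> P - l\<bar> < \<epsilon>)"
  unfolding Phiprime_def DeltaPhi_eval_graph by auto

lemma Phiprime_eval_graph:
  assumes E: "E \<subseteq> X \<times> dualk k" and P: "P \<in> Pk k"
  shows "Phiprime X k (eval_graph P E) = eval_graph P (Eprime X k E)"
proof -
  obtain C where C: "C \<ge> 1" "\<forall>\<eta>\<in>dualk k. \<forall>\<eta>'\<in>dualk k. \<bar>\<eta> P - \<eta>' P\<bar> \<le> C * ddist k \<eta> \<eta>'"
    using dualk_eval_lipschitz[OF P] by blast
  have close: "\<bar>\<zeta> P - \<xi> P\<bar> < \<epsilon>"
    if "(a1, b1, \<zeta>) \<in> DeltaE X k E" "\<xi> \<in> dualk k" "ddist k \<zeta> \<xi> < \<epsilon> / C" for a1 b1 \<zeta> \<xi> \<epsilon>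
  proof -
    have "\<bar>\<zeta> P - \<xi> P\<bar> \<le> C * ddist k \<zeta> \<xi>"
      using C(2) DeltaE_in_dualk[OF E that(1)] that(2) by blast
    moreover have "C * ddist k \<zeta> \<xi> < \<epsilon>"
      using C(1) that(3) by (simp add: pos_less_divide_eq mult.commute)
    ultimately show ?thesis by simp
  qed
  have shrink: "\<epsilon> / C \<le> \<epsilon>" "\<epsilon> / C > 0" if "\<epsilon> > 0" for \<epsilon>
    using C(1) that by (simp_all add: divide_le_eq)
  show ?thesis
  proof (rule set_eqI, clarify)
    fix a \<xi> l
    show "(a, \<xi>, l) \<in> Phiprime X k (eval_graph P E) \<longleftrightarrow> (a, \<xi>, l) \<in> eval_graph P (Eprime X k E)"
    proof
      assume "(a, \<xi>, l) \<in> Phiprime X k (eval_graph P E)"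
      then have a: "a \<in> X" "\<xi> \<in> dualk k" and approx: "\<forall>\<epsilon>>0. \<exists>a1 b1 \<zeta>. (a1, b1, \<zeta>) \<in> DeltaE X k E
          \<and> dist a1 a < \<epsilon> \<and> dist b1 a < \<epsilon> \<and> ddist k \<zeta> \<xi> < \<epsilon> \<and> \<bar>\<zeta> P - l\<bar> < \<epsilon>"
        unfolding mem_Phiprime_eval_graph by auto
      then have "(a, \<xi>) \<in> Eprime X k E"
        unfolding Eprime_def by blast
      moreover have "\<bar>l - \<xi> P\<bar> \<le> 0"
      proof (rule field_le_epsilon)
        fix e :: real assume "e > 0"
        then obtain a1 b1 \<zeta> where "(a1, b1, \<zeta>) \<in> DeltaE X k E" "ddist k \<zeta> \<xi> < (e / 2) / C"
          "\<bar>\<zeta> P - l\<bar> < (e / 2) / C"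
          using approx shrink[of "e / 2"] by auto
        with close[of a1 b1 \<zeta> \<xi> "e / 2"] a(2) shrink[of "e / 2"] \<open>e > 0\<close> show "\<bar>l - \<xi> P\<bar> \<le> 0 + e"
          by linarith
      qed
      ultimately show "(a, \<xi>, l) \<in> eval_graph P (Eprime X k E)"
        unfolding eval_graph_def by simp
    next
      assume "(a, \<xi>, l) \<in> eval_graph P (Eprime X k E)"
      then have l: "l = \<xi> P" and a: "a \<in> X" "\<xi> \<in> dualk k" and approx: "\<forall>\<epsilon>>0. \<exists>a1 b1 \<zeta>.
          (a1, b1, \<zeta>) \<in> DeltaE X k E \<and> dist a1 a < \<epsilon> \<and> dist b1 a < \<epsilon> \<and> ddist k \<zeta> \<xi> < \<epsilon>"
        unfolding eval_graph_def Eprime_def by auto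
      have "\<exists>a1 b1 \<zeta>. (a1, b1, \<zeta>) \<in> DeltaE X k E \<and> dist a1 a < \<epsilon> \<and> dist b1 a < \<epsilon>
          \<and> ddist k \<zeta> \<xi> < \<epsilon> \<and> \<bar>\<zeta> P - l\<bar> < \<epsilon>" if \<epsilon>: "\<epsilon> > 0" for \<epsilon>
      proof -
        obtain a1 b1 \<zeta> where "(a1, b1, \<zeta>) \<in> DeltaE X k E" "dist a1 a < \<epsilon> / C" "dist b1 a < \<epsilon> / C"
          "ddist k \<zeta> \<xi> < \<epsilon> / C"
          using approx shrink[OF \<epsilon>] by blast
        with close[of a1 b1 \<zeta> \<xi> \<epsilon>] a(2) l shrink[OF \<epsilon>] show ?thesis
          by (intro exI[of _ a1] exI[of _ b1] exI[of _ \<zeta>]) auto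
      qed
      with a show "(a, \<xi>, l) \<in> Phiprime X k (eval_graph P E)"
        unfolding mem_Phiprime_eval_graph by blast
    qed
  qed
qed

lemma mem_rhoPhi:
  "(a, \<xi>, l) \<in> rhoPhi X k \<Phi> \<longleftrightarrow> a \<in> X \<and> (\<exists>F c. finite F \<and> F \<subseteq> {(\<eta>, m). (a, \<eta>, m) \<in> Phiprime X k \<Phi>}
      \<and> \<xi> = (\<lambda>P. \<Sum>(\<eta>, m)\<in>F. c (\<eta>, m) * \<eta> P) \<and> l = (\<Sum>(\<eta>, m)\<in>F. c (\<eta>, m) * m))"
  unfolding rhoPhi_def by simp

lemma rhoPhi_eval_graph:
  assumes E: "E \<subseteq> X \<times> dualk k" and P: "P \<in> Pk k"
  shows "rhoPhi X k (eval_graph P E) = eval_graph P (rhoE X k E)"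
proof (rule set_eqI, clarify)
  fix a \<xi> l
  let ?S = "{\<eta>. (a, \<eta>) \<in> Eprime X k E}"
  have fibre: "{(\<eta>, m). (a, \<eta>, m) \<in> Phiprime X k (eval_graph P E)} = {(\<eta>, \<eta> P) | \<eta>. \<eta> \<in> ?S}"
    unfolding Phiprime_eval_graph[OF E P] by (auto simp: eval_graph_def)
  show "(a, \<xi>, l) \<in> rhoPhi X k (eval_graph P E) \<longleftrightarrow> (a, \<xi>, l) \<in> eval_graph P (rhoE X k E)"
  proof
    assume "(a, \<xi>, l) \<in> rhoPhi X k (eval_graph P E)"
    then obtain F c where a: "a \<in> X" and F: "finite F" "F \<subseteq> {(\<eta>, \<eta> P) | \<eta>. \<eta> \<in> ?S}"
      and \<xi>: "\<xi> = (\<lambda>Q. \<Sum>(\<eta>, m)\<in>F. c (\<eta>, m) * \<eta> Q)" and l: "l = (\<Sum>(\<eta>, m)\<in>F. c (\<eta>, m) * m)"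
      unfolding mem_rhoPhi fibre by blast
    have "\<xi> \<in> fspan ?S"
      unfolding \<xi> case_prod_beta using F by (intro fspan_sum) auto
    moreover have "l = \<xi> P"
      unfolding l \<xi> using F(2) by (intro sum.cong) auto
    ultimately show "(a, \<xi>, l) \<in> eval_graph P (rhoE X k E)"
      unfolding eval_graph_def rhoE_def using a by simp
  next
    assume "(a, \<xi>, l) \<in> eval_graph P (rhoE X k E)"
    then obtain F c where a: "a \<in> X" and l: "l = \<xi> P" and F: "finite F" "F \<subseteq> ?S"
      and \<xi>: "\<xi> = (\<lambda>Q. \<Sum>\<eta>\<in>F. c \<eta> * \<eta> Q)"
      unfolding eval_graph_def rhoE_def fspan_def by blast
    let ?G = "(\<lambda>\<eta>. (\<eta>, \<eta> P)) ` F"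
    have inj: "inj_on (\<lambda>\<eta>. (\<eta>, \<eta> P)) F"
      by (auto simp: inj_on_def)
    have "finite ?G" "?G \<subseteq> {(\<eta>, \<eta> P) | \<eta>. \<eta> \<in> ?S}"
      using F by auto
    moreover have "\<xi> = (\<lambda>Q. \<Sum>(\<eta>, m)\<in>?G. c \<eta> * \<eta> Q)" "l = (\<Sum>(\<eta>, m)\<in>?G. c \<eta> * m)"
      unfolding \<xi> l sum.reindex[OF inj] by simp_all
    ultimately show "(a, \<xi>, l) \<in> rhoPhi X k (eval_graph P E)"
      unfolding mem_rhoPhi fibre using a
      by (intro conjI exI[of _ ?G] exI[of _ "\<lambda>(\<eta>, m). c \<eta>"]) auto
  qed
qed

lemma E0_subset_dualk: "E0 X k \<subseteq> X \<times> dualk k"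
  unfolding E0_def using dualk_scale[OF deltaf_in_dualk] by blast

lemma rhoE_subset_dualk: "rhoE X k E \<subseteq> X \<times> dualk k"
proof -
  have "{\<eta>. (a, \<eta>) \<in> Eprime X k E} \<subseteq> dualk k" for a
    unfolding Eprime_def by auto
  then show ?thesis
    unfolding rhoE_def using fspan_subset_dualk by blast
qed

lemma rhoE_iterate_subset_dualk: "(rhoE X k ^^ m) (E0 X k) \<subseteq> X \<times> dualk k"
  by (cases m) (simp_all add: E0_subset_dualk rhoE_subset_dualk)

lemma rhoPhi_iterate_eval_graph:
  "P \<in> Pk k \<Longrightarrow> (rhoPhi X k ^^ m) (Phi0 X k P) = eval_graph P ((rhoE X k ^^ m) (E0 X k))"
  by (induction m) (simp_all add: Phi0_eq_eval_graph rhoPhi_eval_graph rhoE_iterate_subset_dualk)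

lemma rhoE_increasing:
  assumes "E \<subseteq> X \<times> dualk k" "\<And>a. a \<in> X \<Longrightarrow> (a, \<lambda>_. 0) \<in> E"
  shows "E \<subseteq> rhoE X k E"
proof clarify
  fix a \<xi> assume "(a, \<xi>) \<in> E"
  with assms(1) have a: "a \<in> X" "\<xi> \<in> dualk k" by auto
  have "\<xi> = (\<lambda>P. \<xi> P + (\<lambda>_. 0) P)"
    by simp
  moreover have "\<forall>\<alpha>\<in>mi k. dist a a ^ (k - mdeg \<alpha>) * \<bar>xi_alpha (\<lambda>_. 0) \<alpha> a\<bar> \<le> 1"
    by (simp add: xi_alpha_def)
  ultimately have "(a, a, \<xi>) \<in> DeltaE X k E"
    unfolding DeltaE_def using a assms(2) \<open>(a, \<xi>) \<in> E\<close> by blast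
  then have "(a, \<xi>) \<in> Eprime X k E"
    unfolding Eprime_def using a by (auto simp: ddist_def intro!: exI[of _ a] exI[of _ \<xi>])
  then show "(a, \<xi>) \<in> rhoE X k E"
    unfolding rhoE_def using a by (simp add: fspan_base)
qed

lemma rhoE_iterate_mono: "m \<le> n \<Longrightarrow> (rhoE X k ^^ m) (E0 X k) \<subseteq> (rhoE X k ^^ n) (E0 X k)"
proof (rule lift_Suc_mono_le[of "\<lambda>m. (rhoE X k ^^ m) (E0 X k)"])
  fix m
  have "(a, \<lambda>_. 0) \<in> (rhoE X k ^^ m) (E0 X k)" if "a \<in> X" for a
    using that fspan_zero by (cases m) (auto simp: E0_def rhoE_def intro!: exI[of _ 0])
  then have "(rhoE X k ^^ m) (E0 X k) \<subseteq> rhoE X k ((rhoE X k ^^ m) (E0 X k))"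
    by (rule rhoE_increasing[OF rhoE_iterate_subset_dualk])
  then show "(rhoE X k ^^ m) (E0 X k) \<subseteq> (rhoE X k ^^ Suc m) (E0 X k)"
    by simp
qed

lemma pnabla_Pk:
  fixes X :: "'n::finite rv set"
  assumes "P \<in> Pk k"
  shows "pnabla X k P = eval_graph P ((rhoE X k ^^ (2 * (card (mi k :: ('n \<Rightarrow> nat) set) + 1))) (E0 X k))"
  unfolding pnabla_def using assms by (rule rhoPhi_iterate_eval_graph)

lemma ptau_subset_nabla_domain:
  fixes X :: "'n::finite rv set"
  shows "ptau X k \<subseteq> (rhoE X k ^^ (2 * (card (mi k :: ('n \<Rightarrow> nat) set) + 1))) (E0 X k)"
  unfolding ptau_def by (rule rhoE_iterate_mono) simp

lemma mem_pnabla_Pk: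
  assumes "P \<in> Pk k" "(a, \<eta>) \<in> ptau X k"
  shows "(a, \<eta>, l) \<in> pnabla X k P \<longleftrightarrow> l = \<eta> P"
  using assms ptau_subset_nabla_domain unfolding pnabla_Pk[OF assms(1)] eval_graph_def by auto

lemma nabla_is_fun_Pk: "P \<in> Pk k \<Longrightarrow> nabla_is_fun X k P"
  unfolding nabla_is_fun_def by (simp add: mem_pnabla_Pk)

lemma nabla_val_Pk: "P \<in> Pk k \<Longrightarrow> (a, \<eta>) \<in> ptau X k \<Longrightarrow> nabla_val X k P a \<eta> = \<eta> P"
  unfolding nabla_val_def by (simp add: mem_pnabla_Pk)

lemma ptau_fibre_separation:
  fixes X :: "'n::finite rv set"
  assumes "a \<in> X" "\<zeta> \<in> dualk k" "(a, \<zeta>) \<notin> ptau X k"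
  shows "\<exists>P\<in>Pk k. (\<forall>\<eta>. (a, \<eta>) \<in> ptau X k \<longrightarrow> \<eta> P = 0) \<and> \<zeta> P \<noteq> 0"
proof -
  define r where "r = card (mi k :: ('n \<Rightarrow> nat) set)"
  have "r > 0"
    unfolding r_def using finite_mi zero_in_mi by (auto simp: card_gt_0_iff)
  then have two_r: "2 * r = Suc (2 * r - 1)" by simp
  have ptau: "ptau X k = rhoE X k ((rhoE X k ^^ (2 * r - 1)) (E0 X k))"
    unfolding ptau_def r_def[symmetric] by (subst two_r) simp
  let ?S = "{\<eta>. (a, \<eta>) \<in> Eprime X k ((rhoE X k ^^ (2 * r - 1)) (E0 X k))}"
  have fibre: "(a, \<eta>) \<in> ptau X k \<longleftrightarrow> \<eta> \<in> fspan ?S" for \<eta>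
    unfolding ptau rhoE_def using assms(1) by simp
  have "?S \<subseteq> dualk k"
    unfolding Eprime_def by auto
  moreover have "\<zeta> \<notin> fspan ?S"
    using assms(3) fibre by simp
  ultimately obtain P where "P \<in> Pk k" "\<forall>\<eta>\<in>?S. \<eta> P = 0" "\<zeta> P \<noteq> 0"
    using dualk_separation assms(2) by blast
  then show ?thesis
    using fibre fspan_annihilated by blast
qed

theorem corollary2p4:
  fixes X :: "('n::finite) rv set" and qX :: "nat \<Rightarrow> nat" and s p q :: nat
  assumes "compact X" and "subanalytic X"
    and "\<forall>p. qX p \<ge> p"
    and "\<forall>p' (f :: 'n rv \<Rightarrow> real) q'. q' \<ge> qX p' \<longrightarrow> nabla_is_fun X q' f \<longrightarrow>
           ((\<exists>F. Cp p' F \<and> (\<forall>x\<in>X. F x = f x)) \<and>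
            (\<forall>a\<in>X. nabla_zero_at X q' f a \<longrightarrow>
               (\<exists>F. Cp p' F \<and> (\<forall>x\<in>X. F x = f x) \<and> pflat p' F a)))"
    and "s \<ge> p" and "q \<ge> qX s"
  shows "\<forall>a\<in>X. Tcal_p X s p a \<subseteq> tau_p X q p a"
proof (intro ballI subsetI)
  fix a \<xi> assume a: "a \<in> X" and "\<xi> \<in> Tcal_p X s p a"
  then have \<xi>: "\<xi> \<in> dualk p" and vanish: "\<And>h. Cp s h \<Longrightarrow> \<forall>x\<in>X. h x = 0 \<Longrightarrow> \<xi> (taylor p a h) = 0"
    unfolding Tcal_p_def by auto
  show "\<xi> \<in> tau_p X q p a"
  proof (rule ccontr)
    assume "\<xi> \<notin> tau_p X q p a"
    with \<xi> have "(a, iota q p a \<xi>) \<notin> ptau X q"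
      unfolding tau_p_def by simp
    then obtain P where P: "P \<in> Pk q" "\<forall>\<eta>. (a, \<eta>) \<in> ptau X q \<longrightarrow> \<eta> P = 0" "iota q p a \<xi> P \<noteq> 0"
      using ptau_fibre_separation[OF a iota_in_dualk[OF \<xi>]] by blast
    have "nabla_is_fun X q P" "nabla_zero_at X q P a"
      using P by (simp_all add: nabla_is_fun_Pk nabla_zero_at_def nabla_val_Pk)
    then obtain F where F: "Cp s F" "\<forall>x\<in>X. F x = P x" "pflat s F a"
      using assms(4,6) a by blast
    have "Cp s (\<lambda>x. P x - F x)" "\<forall>x\<in>X. P x - F x = 0"
      using F Pk_Cp[OF P(1)] by (simp_all add: Cp_diff)
    then have "\<xi> (taylor p a (\<lambda>x. P x - F x)) = 0"
      by (rule vanish)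
    then have "\<xi> (taylor p a P) = 0"
      using taylor_diff_flat[OF Pk_Cp[OF P(1)] F(1,3) assms(5)] by simp
    with P(1,3) show False
      by (simp add: iota_def)
  qed
qed

end
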